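(* Let $z,\zeta\in\mathbb C$ with $0<\mathrm{Re}\,z<1$ and $0<\mathrm{Re}\,\zeta<1$. Let $f\in C^1([0,\infty))$ be such that $f\in L^1(\mathbb R_+,|\lambda^{z-1}|d\lambda)\cap L^1(\mathbb R_+,|\lambda^{\zeta-1}|d\lambda)$, $f'\in L^1(\mathbb R_+,|\lambda^{z+\zeta-1}|d\lambda)$ and $\tilde f\in L^1(\mathbb R_+^2,|\lambda^{z-1}\mu^{\zeta-1}|d\lambda d\mu)$. Then $$\gamma_1(z)\gamma_1(\zeta)\int_{\mathbb R_+^2}\lambda^{z-1}\mu^{\zeta-1}\tilde f(\lambda,\mu)\,d\lambda d\mu=\gamma_2(z+\zeta)\int_0^\infty\lambda^{z+\zeta-1}f'(\lambda)\,d\lambda.$$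
   Context: $\mathbb R_+=(0,\infty)$. For $k\in\mathbb Z_+$ and $z\in\mathbb C$, $\gamma_k(z)=\Gamma(k)/(\Gamma(z)\Gamma(k-z))$, $\Gamma$ the Gamma function. For $f\in C^1([0,\infty))$, $\tilde f(\lambda,\mu)=(f(\lambda)-f(\mu))/(\lambda-\mu)$ if $\lambda\ne\mu$ and $\tilde f(\lambda,\lambda)=f'(\lambda)$. Complex powers $\lambda^{z-1}$ for $\lambda>0$ are taken with the real logarithm. *)

theory Defs
  imports "HOL-Analysis.Analysis"
begin

definition gammak :: "nat \<Rightarrow> complex \<Rightarrow> complex" where
  "gammak k z = Gamma (of_nat k) / (Gamma z * Gamma (of_nat k - z))"

definition divdiff :: "(real \<Rightarrow> real) \<Rightarrow> (real \<Rightarrow> real) \<Rightarrow> real \<Rightarrow> real \<Rightarrow> real" where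
  "divdiff f f' x y = (if x \<noteq> y then (f x - f y) / (x - y) else f' x)"

definition C1_halfline :: "(real \<Rightarrow> real) \<Rightarrow> (real \<Rightarrow> real) \<Rightarrow> bool" where
  "C1_halfline f f' \<longleftrightarrow>
     (\<forall>x\<ge>0. (f has_real_derivative f' x) (at x within {0..})) \<and> continuous_on {0..} f'"

end

theory Submission
  imports Defs
begin

text \<open>Since \<open>f~(x, y) = \<integral>_0^1 f'(t x + (1 - t) y) dt\<close>, the left-hand side is a triple
  integral over \<open>(x, y, t)\<close>. The substitution \<open>s = t x + (1 - t) y\<close>, \<open>r = t x / s\<close> turns
  \<open>x^(z-1) y^(\<zeta>-1) dx dy dt\<close> into
  \<open>s^(z+\<zeta>-1) r^(z-1) (1-r)^(\<zeta>-1) t^(-z) (1-t)^(-\<zeta>) ds dr dt\<close>, so the integral factors as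
  \<open>B(z, \<zeta>) B(1 - z, 1 - \<zeta>) \<integral>_0^\<infinity> s^(z+\<zeta>-1) f'(s) ds\<close>. By
  \<open>B(a, b) = \<Gamma>(a) \<Gamma>(b) / \<Gamma>(a + b)\<close>, the factor \<open>\<gamma>_1(z) \<gamma>_1(\<zeta>) B(z, \<zeta>) B(1 - z, 1 - \<zeta>)\<close>
  equals \<open>\<gamma>_2(z + \<zeta>)\<close>. The complex Beta integral is in turn obtained from a product of two
  Gamma integrals through the substitution \<open>(x, y) \<mapsto> (x + y, x / (x + y))\<close>.\<close>

section \<open>Changes of variables\<close>

lemma borel_measurable_fst_snd [measurable]:
  "fst \<in> borel_measurable (borel :: ('a::euclidean_space \<times> 'b::euclidean_space) measure)"
  "snd \<in> borel_measurable (borel :: ('a::euclidean_space \<times> 'b::euclidean_space) measure)"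
  by (simp_all add: borel_measurable_continuous_onI continuous_on_fst continuous_on_snd)

lemma sets_borel_Times [measurable]:
  "A \<in> sets borel \<Longrightarrow> B \<in> sets borel \<Longrightarrow>
     A \<times> B \<in> sets (borel :: ('a::euclidean_space \<times> 'b::euclidean_space) measure)"
  by (subst borel_prod[symmetric]) auto

lemma borel_measurable_lborel_pair:
  "f \<in> borel_measurable borel \<Longrightarrow>
     f \<in> borel_measurable (lborel \<Otimes>\<^sub>M lborel :: ('a::euclidean_space \<times> 'b::euclidean_space) measure)"
  unfolding lborel_prod by simp

lemma integral_transfer_from_nn_integral:
  fixes \<Phi> :: "'a::euclidean_space \<Rightarrow> 'b::euclidean_space"
    and w :: "'a \<Rightarrow> real" and w' :: "'b \<Rightarrow> real" and k :: "'b \<Rightarrow> 'c::{banach, second_countable_topology}"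
  assumes \<Phi> [measurable]: "\<Phi> \<in> borel_measurable borel"
    and [measurable]: "w \<in> borel_measurable borel" "w' \<in> borel_measurable borel"
    and nonneg: "\<And>x. w x \<ge> 0" "\<And>y. w' y \<ge> 0"
    and nn_transfer: "\<And>h. h \<in> borel_measurable borel \<Longrightarrow>
        (\<integral>\<^sup>+x. ennreal (w x) * h (\<Phi> x) \<partial>lborel) = (\<integral>\<^sup>+y. ennreal (w' y) * h y \<partial>lborel)"
    and [measurable]: "k \<in> borel_measurable borel"
  shows "integrable lborel (\<lambda>x. w x *\<^sub>R k (\<Phi> x)) \<longleftrightarrow> integrable lborel (\<lambda>y. w' y *\<^sub>R k y)"
    and "integral\<^sup>L lborel (\<lambda>x. w x *\<^sub>R k (\<Phi> x)) = integral\<^sup>L lborel (\<lambda>y. w' y *\<^sub>R k y)"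
proof -
  have distr_eq: "distr (density lborel w) lborel \<Phi> = density lborel w'"
  proof (rule measure_eqI)
    fix A assume "A \<in> sets (distr (density lborel w) lborel \<Phi>)"
    hence A [measurable]: "A \<in> sets borel" by simp
    have "emeasure (distr (density lborel w) lborel \<Phi>) A
        = (\<integral>\<^sup>+x. ennreal (w x) * indicator (\<Phi> -` A) x \<partial>lborel)"
      using measurable_sets[OF \<Phi> A] by (subst emeasure_distr) (auto simp: emeasure_density)
    also have "\<dots> = (\<integral>\<^sup>+x. ennreal (w x) * indicator A (\<Phi> x) \<partial>lborel)"
      by (intro nn_integral_cong) (auto simp: indicator_def)
    also have "\<dots> = emeasure (density lborel w') A"
      by (subst nn_transfer) (auto simp: emeasure_density)
    finally show "emeasure (distr (density lborel w) lborel \<Phi>) A = emeasure (density lborel w') A" .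
  qed simp
  have "integrable lborel (\<lambda>x. w x *\<^sub>R k (\<Phi> x)) \<longleftrightarrow> integrable (density lborel w) (\<lambda>x. k (\<Phi> x))"
    using nonneg by (subst integrable_density) auto
  also have "\<dots> \<longleftrightarrow> integrable (distr (density lborel w) lborel \<Phi>) k"
    by (subst integrable_distr_eq) auto
  also have "\<dots> \<longleftrightarrow> integrable lborel (\<lambda>y. w' y *\<^sub>R k y)"
    unfolding distr_eq using nonneg by (subst integrable_density) auto
  finally show "integrable lborel (\<lambda>x. w x *\<^sub>R k (\<Phi> x)) \<longleftrightarrow> integrable lborel (\<lambda>y. w' y *\<^sub>R k y)" .
  have "integral\<^sup>L lborel (\<lambda>x. w x *\<^sub>R k (\<Phi> x)) = integral\<^sup>L (density lborel w) (\<lambda>x. k (\<Phi> x))"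
    using nonneg by (subst integral_density) auto
  also have "\<dots> = integral\<^sup>L (distr (density lborel w) lborel \<Phi>) k"
    by (subst integral_distr) auto
  also have "\<dots> = integral\<^sup>L lborel (\<lambda>y. w' y *\<^sub>R k y)"
    unfolding distr_eq using nonneg by (subst integral_density) auto
  finally show "integral\<^sup>L lborel (\<lambda>x. w x *\<^sub>R k (\<Phi> x)) = integral\<^sup>L lborel (\<lambda>y. w' y *\<^sub>R k y)" .
qed

context pair_sigma_finite
begin

lemma integrable_product:
  fixes f :: "'a \<Rightarrow> 'c::{real_normed_field, banach, second_countable_topology}"
  assumes "integrable M1 f" "integrable M2 g"
  shows "integrable (M1 \<Otimes>\<^sub>M M2) (\<lambda>p. f (fst p) * g (snd p))"
proof (subst integrable_iff_bounded, safe)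
  have [measurable]: "f \<in> borel_measurable M1" "g \<in> borel_measurable M2"
    using assms by auto
  show "(\<lambda>p. f (fst p) * g (snd p)) \<in> borel_measurable (M1 \<Otimes>\<^sub>M M2)"
    by measurable
  have "(\<integral>\<^sup>+ p. ennreal (norm (f (fst p) * g (snd p))) \<partial>(M1 \<Otimes>\<^sub>M M2))
      = (\<integral>\<^sup>+ x. ennreal (norm (f x)) \<partial>M1) * (\<integral>\<^sup>+ y. ennreal (norm (g y)) \<partial>M2)"
    by (subst M2.nn_integral_fst[symmetric])
       (auto simp: norm_mult ennreal_mult nn_integral_cmult nn_integral_multc)
  also have "\<dots> < \<infinity>"
    using assms by (simp add: integrable_iff_bounded ennreal_mult_less_top)
  finally show "(\<integral>\<^sup>+ p. ennreal (norm (f (fst p) * g (snd p))) \<partial>(M1 \<Otimes>\<^sub>M M2)) < \<infinity>" .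
qed

lemma integral_product:
  fixes f :: "'a \<Rightarrow> 'c::{real_normed_field, banach, second_countable_topology}"
  assumes "integrable M1 f" "integrable M2 g"
  shows "integral\<^sup>L (M1 \<Otimes>\<^sub>M M2) (\<lambda>p. f (fst p) * g (snd p)) = integral\<^sup>L M1 f * integral\<^sup>L M2 g"
  using integral_fst'[OF integrable_product[OF assms]] by simp

end

lemma nn_integral_lborel_pair_scale:
  fixes G :: "real \<times> real \<Rightarrow> ennreal"
  assumes [measurable]: "G \<in> borel_measurable borel" and "\<alpha> > 0" "\<beta> > 0"
  shows "(\<integral>\<^sup>+p. G p \<partial>lborel) = ennreal (\<alpha> * \<beta>) * (\<integral>\<^sup>+p. G (\<alpha> * fst p, \<beta> * snd p) \<partial>lborel)"
proof -
  have [measurable]: "G \<in> borel_measurable (lborel \<Otimes>\<^sub>M lborel)"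
    "case_prod (\<lambda>x y. G (x, \<beta> * y)) \<in> borel_measurable (lborel \<Otimes>\<^sub>M lborel)"
    "case_prod (\<lambda>x y. G (\<alpha> * x, \<beta> * y)) \<in> borel_measurable (lborel \<Otimes>\<^sub>M lborel)"
    by (intro borel_measurable_lborel_pair; simp add: case_prod_beta')+
  have "(\<integral>\<^sup>+p. G p \<partial>lborel) = (\<integral>\<^sup>+x. \<integral>\<^sup>+y. G (x, y) \<partial>lborel \<partial>lborel)"
    by (subst lborel_prod[symmetric], subst lborel.nn_integral_fst[symmetric]) auto
  also have "\<dots> = (\<integral>\<^sup>+x. ennreal \<beta> * \<integral>\<^sup>+y. G (x, \<beta> * y) \<partial>lborel \<partial>lborel)"
  proof (rule nn_integral_cong)
    fix x :: real
    show "(\<integral>\<^sup>+y. G (x, y) \<partial>lborel) = ennreal \<beta> * \<integral>\<^sup>+y. G (x, \<beta> * y) \<partial>lborel"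
      using nn_integral_real_affine[of "\<lambda>y. G (x, y)" \<beta> 0] \<open>\<beta> > 0\<close> by simp
  qed
  also have "\<dots> = ennreal \<beta> * (\<integral>\<^sup>+x. \<integral>\<^sup>+y. G (x, \<beta> * y) \<partial>lborel \<partial>lborel)"
    by (rule nn_integral_cmult) measurable
  also have "(\<integral>\<^sup>+x. \<integral>\<^sup>+y. G (x, \<beta> * y) \<partial>lborel \<partial>lborel)
      = ennreal \<alpha> * (\<integral>\<^sup>+x. \<integral>\<^sup>+y. G (\<alpha> * x, \<beta> * y) \<partial>lborel \<partial>lborel)"
    using nn_integral_real_affine[of "\<lambda>x. \<integral>\<^sup>+y. G (x, \<beta> * y) \<partial>lborel" \<alpha> 0] \<open>\<alpha> > 0\<close> by simp
  also have "(\<integral>\<^sup>+x. \<integral>\<^sup>+y. G (\<alpha> * x, \<beta> * y) \<partial>lborel \<partial>lborel) = (\<integral>\<^sup>+p. G (\<alpha> * fst p, \<beta> * snd p) \<partial>lborel)"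
    by (subst lborel_prod[symmetric], subst lborel.nn_integral_fst[symmetric]) auto
  finally show ?thesis
    using assms by (simp add: ennreal_mult mult_ac)
qed

lemma nn_integral_Ioo_rescale:
  fixes \<phi> :: "real \<Rightarrow> ennreal"
  assumes "\<phi> \<in> borel_measurable borel" "u > 0"
  shows "(\<integral>\<^sup>+x. indicator {0<..<u} x * \<phi> (x / u) \<partial>lborel)
       = ennreal u * (\<integral>\<^sup>+r. indicator {0<..<1} r * \<phi> r \<partial>lborel)"
  using assms
  by (subst nn_integral_real_affine[where c = u and t = 0])
     (auto intro!: nn_integral_cong simp: indicator_def zero_less_mult_iff)

lemma nn_integral_sum_ratio_coords:
  fixes h :: "real \<times> real \<Rightarrow> ennreal"
  assumes [measurable]: "h \<in> borel_measurable borel"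
  shows "(\<integral>\<^sup>+p. ennreal (indicator ({0<..} \<times> {0<..}) p) * h (fst p + snd p, fst p / (fst p + snd p)) \<partial>lborel)
       = (\<integral>\<^sup>+p. ennreal (indicator ({0<..} \<times> {0<..<1}) p * fst p) * h p \<partial>lborel)"
proof -
  have [measurable]: "(\<lambda>(x, u). indicator {0<..} x * indicator {0<..} (u - x) * h (u, x / u))
      \<in> borel_measurable (lborel \<Otimes>\<^sub>M lborel)"
    "(\<lambda>p. ennreal (indicator ({0<..} \<times> {0<..<1}) p * fst p) * h p)
      \<in> borel_measurable (lborel \<Otimes>\<^sub>M lborel)"
    "(\<lambda>(x, y). ennreal (indicator ({0<..} \<times> {0<..}) (x, y)) * h (x + y, x / (x + y)))
      \<in> borel_measurable (lborel \<Otimes>\<^sub>M lborel)"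
    by (intro borel_measurable_lborel_pair; simp add: case_prod_beta'; measurable)+
  have "(\<integral>\<^sup>+p. ennreal (indicator ({0<..} \<times> {0<..}) p) * h (fst p + snd p, fst p / (fst p + snd p)) \<partial>lborel)
     = (\<integral>\<^sup>+x. \<integral>\<^sup>+y. ennreal (indicator ({0<..} \<times> {0<..}) (x, y)) * h (x + y, x / (x + y)) \<partial>lborel \<partial>lborel)"
    by (subst lborel_prod[symmetric], subst lborel.nn_integral_fst[symmetric]) auto
  also have "\<dots> = (\<integral>\<^sup>+x. \<integral>\<^sup>+u. indicator {0<..} x * indicator {0<..} (u - x) * h (u, x / u) \<partial>lborel \<partial>lborel)"
  proof (rule nn_integral_cong)
    fix x :: real
    show "(\<integral>\<^sup>+y. ennreal (indicator ({0<..} \<times> {0<..}) (x, y)) * h (x + y, x / (x + y)) \<partial>lborel)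
        = (\<integral>\<^sup>+u. indicator {0<..} x * indicator {0<..} (u - x) * h (u, x / u) \<partial>lborel)"
      by (subst nn_integral_real_affine[where c = 1 and t = x]) (auto intro!: nn_integral_cong simp: indicator_def)
  qed
  also have "\<dots> = (\<integral>\<^sup>+u. \<integral>\<^sup>+x. indicator {0<..} x * indicator {0<..} (u - x) * h (u, x / u) \<partial>lborel \<partial>lborel)"
    by (rule lborel_pair.Fubini'[symmetric]) measurable
  also have "\<dots> = (\<integral>\<^sup>+u. \<integral>\<^sup>+r. ennreal (indicator ({0<..} \<times> {0<..<1}) (u, r) * u) * h (u, r) \<partial>lborel \<partial>lborel)"
  proof (rule nn_integral_cong)
    fix u :: real
    have "(\<integral>\<^sup>+x. indicator {0<..} x * indicator {0<..} (u - x) * h (u, x / u) \<partial>lborel)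
        = (\<integral>\<^sup>+x. indicator {0<..<u} x * h (u, x / u) \<partial>lborel)"
      by (intro nn_integral_cong) (auto simp: indicator_def)
    also have "\<dots> = (\<integral>\<^sup>+r. ennreal (indicator ({0<..} \<times> {0<..<1}) (u, r) * u) * h (u, r) \<partial>lborel)"
    proof (cases "u > 0")
      case True
      have [measurable]: "(\<lambda>r. h (u, r)) \<in> borel_measurable borel"
        by measurable
      have "(\<integral>\<^sup>+x. indicator {0<..<u} x * h (u, x / u) \<partial>lborel)
          = ennreal u * (\<integral>\<^sup>+r. indicator {0<..<1} r * h (u, r) \<partial>lborel)"
        using nn_integral_Ioo_rescale[of "\<lambda>r. h (u, r)" u] True by simp
      also have "\<dots> = (\<integral>\<^sup>+r. ennreal (indicator ({0<..} \<times> {0<..<1}) (u, r) * u) * h (u, r) \<partial>lborel)"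
        using True by (subst nn_integral_cmult[symmetric]) (auto intro!: nn_integral_cong simp: indicator_def)
      finally show ?thesis .
    qed (auto simp: indicator_def)
    finally show "(\<integral>\<^sup>+x. indicator {0<..} x * indicator {0<..} (u - x) * h (u, x / u) \<partial>lborel)
        = (\<integral>\<^sup>+r. ennreal (indicator ({0<..} \<times> {0<..<1}) (u, r) * u) * h (u, r) \<partial>lborel)" .
  qed
  also have "\<dots> = (\<integral>\<^sup>+p. ennreal (indicator ({0<..} \<times> {0<..<1}) p * fst p) * h p \<partial>lborel)"
    by (subst lborel_prod[symmetric], subst lborel.nn_integral_fst[symmetric]) auto
  finally show ?thesis .
qed

lemma nn_integral_interp_coords_slice:
  fixes h :: "real \<times> real \<Rightarrow> ennreal"
  assumes [measurable]: "h \<in> borel_measurable borel" and t: "0 < t" "t < 1"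
  shows "(\<integral>\<^sup>+p. ennreal (indicator ({0<..} \<times> {0<..}) p) *
            h (t * fst p + (1 - t) * snd p, t * fst p / (t * fst p + (1 - t) * snd p)) \<partial>lborel)
       = (\<integral>\<^sup>+p. ennreal (indicator ({0<..} \<times> {0<..<1}) p * fst p / (t * (1 - t))) * h p \<partial>lborel)"
    (is "?L = ?R")
proof -
  define G where "G p = ennreal (indicator ({0<..} \<times> {0<..}) p) * h (fst p + snd p, fst p / (fst p + snd p))"
    for p :: "real \<times> real"
  have [measurable]: "G \<in> borel_measurable borel"
    unfolding G_def by measurable
  have "?L = (\<integral>\<^sup>+p. G (t * fst p, (1 - t) * snd p) \<partial>lborel)"
    using t by (intro nn_integral_cong) (auto simp: G_def indicator_def zero_less_mult_iff)
  hence "ennreal (t * (1 - t)) * ?L = (\<integral>\<^sup>+p. G p \<partial>lborel)"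
    using t by (simp add: nn_integral_lborel_pair_scale[of G t "1 - t"])
  also have "\<dots> = (\<integral>\<^sup>+p. ennreal (indicator ({0<..} \<times> {0<..<1}) p * fst p) * h p \<partial>lborel)"
    unfolding G_def by (rule nn_integral_sum_ratio_coords) measurable
  also have "\<dots> = ennreal (t * (1 - t)) * ?R"
    using t by (subst nn_integral_cmult[symmetric])
      (auto intro!: nn_integral_cong simp: ennreal_mult'[symmetric] mult.assoc[symmetric] indicator_def)
  finally show ?thesis
    using t by (subst (asm) ennreal_mult_cancel_left) auto
qed

definition interp_coords :: "(real \<times> real) \<times> real \<Rightarrow> (real \<times> real) \<times> real" where
  "interp_coords q =
     ((snd q * fst (fst q) + (1 - snd q) * snd (fst q),
       snd q * fst (fst q) / (snd q * fst (fst q) + (1 - snd q) * snd (fst q))), snd q)"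

lemma interp_coords_Pair [simp]:
  "interp_coords ((x, y), t) = ((t * x + (1 - t) * y, t * x / (t * x + (1 - t) * y)), t)"
  by (simp add: interp_coords_def)

lemma borel_measurable_interp_coords [measurable]: "interp_coords \<in> borel_measurable borel"
  unfolding interp_coords_def by measurable

lemma interp_coords_inverse:
  assumes "0 < x" "0 < y" "0 < t" "t < 1" and "interp_coords ((x, y), t) = ((s, r), t)"
  shows "0 < s" and "s * r / t = x" and "s * (1 - r) / (1 - t) = y"
proof -
  have s: "s = t * x + (1 - t) * y" and r: "r = t * x / s"
    using assms(5) by auto
  show "0 < s"
    unfolding s using assms(1-4) by (intro add_pos_pos) auto
  then show "s * r / t = x" and "s * (1 - r) / (1 - t) = y"
    using assms(3,4) by (simp_all add: r field_simps) (simp add: s algebra_simps)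
qed

lemma nn_integral_interp_coords:
  fixes h :: "(real \<times> real) \<times> real \<Rightarrow> ennreal"
  assumes [measurable]: "h \<in> borel_measurable borel"
  shows "(\<integral>\<^sup>+q. ennreal (indicator ({0<..} \<times> {0<..}) (fst q) * indicator {0<..<1} (snd q)) *
            h (interp_coords q) \<partial>lborel)
       = (\<integral>\<^sup>+q. ennreal (indicator ({0<..} \<times> {0<..<1}) (fst q) * indicator {0<..<1} (snd q) *
            (fst (fst q) / (snd q * (1 - snd q)))) * h q \<partial>lborel)"
proof -
  have [measurable]:
    "(\<lambda>q. ennreal (indicator ({0<..} \<times> {0<..}) (fst q) * indicator {0<..<1} (snd q)) * h (interp_coords q))
       \<in> borel_measurable (lborel \<Otimes>\<^sub>M lborel)"
    "(\<lambda>q. ennreal (indicator ({0<..} \<times> {0<..<1}) (fst q) * indicator {0<..<1} (snd q) *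
            (fst (fst q) / (snd q * (1 - snd q)))) * h q) \<in> borel_measurable (lborel \<Otimes>\<^sub>M lborel)"
    by (intro borel_measurable_lborel_pair; measurable)+
  have slice: "(\<integral>\<^sup>+p. ennreal (indicator ({0<..} \<times> {0<..}) p * indicator {0<..<1} t) *
                   h (interp_coords (p, t)) \<partial>lborel)
             = (\<integral>\<^sup>+p. ennreal (indicator ({0<..} \<times> {0<..<1}) p * indicator {0<..<1} t *
                   (fst p / (t * (1 - t)))) * h (p, t) \<partial>lborel)" for t
  proof (cases "0 < t \<and> t < 1")
    case True
    have [measurable]: "(\<lambda>p. h (p, t)) \<in> borel_measurable borel"
      by measurable
    show ?thesis
      using nn_integral_interp_coords_slice[of "\<lambda>p. h (p, t)" t] True
      by (simp add: mult.commute interp_coords_def)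
  qed (auto simp: indicator_def)
  show ?thesis
    by (subst (1 2) lborel_prod[symmetric], subst (1 2) lborel_pair.nn_integral_snd[symmetric])
      (measurable, measurable, simp only: fst_conv snd_conv slice)
qed

section \<open>Gamma and Beta integrals\<close>

text \<open>For \<open>u > 0\<close>, \<open>cpow u c\<close> is \<open>of_real u powr c\<close>; being defined through the real
  logarithm, it is Borel measurable in \<open>u\<close> by construction.\<close>
definition cpow :: "real \<Rightarrow> complex \<Rightarrow> complex" where
  "cpow u c = exp (c * of_real (ln u))"

lemma borel_measurable_cpow [measurable]:
  "f \<in> borel_measurable M \<Longrightarrow> (\<lambda>x. cpow (f x) c) \<in> borel_measurable M"
  unfolding cpow_def by measurable

lemma cpow_mult: "u > 0 \<Longrightarrow> v > 0 \<Longrightarrow> cpow (u * v) c = cpow u c * cpow v c"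
  by (simp add: cpow_def ln_mult distrib_left exp_add)

lemma cpow_add: "cpow u (c + d) = cpow u c * cpow u d"
  by (simp add: cpow_def distrib_right exp_add)

lemma cpow_one: "u > 0 \<Longrightarrow> cpow u 1 = of_real u"
  by (simp add: cpow_def exp_of_real)

lemma powr_eq_cpow: "u > 0 \<Longrightarrow> complex_of_real u powr c = cpow u c"
  by (simp add: cpow_def powr_def Ln_of_real mult.commute)

lemma norm_cpow: "u > 0 \<Longrightarrow> norm (cpow u c) = u powr Re c"
  by (simp add: cpow_def powr_def)

definition Gamma_kernel :: "complex \<Rightarrow> real \<Rightarrow> complex" where
  "Gamma_kernel a t = indicator {0<..} t *\<^sub>R (cpow t (a - 1) * exp (- of_real t))"

definition Beta_kernel :: "complex \<Rightarrow> complex \<Rightarrow> real \<Rightarrow> complex" where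
  "Beta_kernel a b r = indicator {0<..<1} r *\<^sub>R (cpow r (a - 1) * cpow (1 - r) (b - 1))"

lemma
  assumes "Re a > 0"
  shows integrable_Gamma_kernel: "integrable lborel (Gamma_kernel a)"
    and integral_Gamma_kernel: "integral\<^sup>L lborel (Gamma_kernel a) = Gamma a"
proof -
  let ?f = "\<lambda>t. complex_of_real t powr (a - 1) / of_real (exp t)"
  let ?g = "\<lambda>t. cpow t (a - 1) * exp (- of_real t)"
  have eq: "?f t = ?g t" if "t \<in> {0<..}" for t
    using that by (simp add: powr_eq_cpow exp_of_real exp_minus field_simps)
  have "set_integrable lebesgue {0<..} ?f"
    using absolutely_integrable_Gamma_integral'[OF assms] .
  hence "set_integrable lebesgue {0<..} ?g"
    using eq by (subst set_integrable_cong[of _ lebesgue _ "{0<..}" _ ?f]) auto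
  hence I: "set_integrable lborel {0<..} ?g"
    unfolding set_integrable_def by (simp add: integrable_completion)
  thus "integrable lborel (Gamma_kernel a)"
    unfolding set_integrable_def Gamma_kernel_def[abs_def] .
  have "integral\<^sup>L lborel (Gamma_kernel a) = integral {0<..} ?g"
    using set_borel_integral_eq_integral(2)[OF I] by (simp add: set_lebesgue_integral_def Gamma_kernel_def[abs_def])
  also have "\<dots> = integral {0<..} ?f"
    using eq by (intro integral_cong) auto
  also have "\<dots> = Gamma a"
    using Gamma_integral_complex'[OF assms] by (rule integral_unique)
  finally show "integral\<^sup>L lborel (Gamma_kernel a) = Gamma a" .
qed

lemma Gamma_nonzero_Re_pos: "Re z > 0 \<Longrightarrow> Gamma z \<noteq> 0"
  by (auto simp: Gamma_eq_zero_iff elim!: nonpos_Ints_cases)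

lemma integrable_Beta_kernel:
  assumes "Re a > 0" "Re b > 0"
  shows "integrable lborel (Beta_kernel a b)"
proof (rule Bochner_Integration.integrable_bound)
  show "integrable lborel (\<lambda>t. indicator {0..1} t *\<^sub>R (t powr (Re a - 1) * (1 - t) powr (Re b - 1)))"
    using integrable_Beta[of "Re a" "Re b"] assms by (simp add: set_integrable_def)
  show "Beta_kernel a b \<in> borel_measurable lborel"
    unfolding Beta_kernel_def by measurable
  show "AE x in lborel. norm (Beta_kernel a b x)
          \<le> norm (indicator {0..1} x *\<^sub>R (x powr (Re a - 1) * (1 - x) powr (Re b - 1)))"
    by (intro AE_I2) (auto simp: Beta_kernel_def indicator_def norm_mult norm_cpow)
qed

lemma integral_Beta_kernel:
  assumes a: "Re a > 0" and b: "Re b > 0"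
  shows "integral\<^sup>L lborel (Beta_kernel a b) = Beta a b"
proof -
  define k where "k p = cpow (fst p * snd p) (a - 1) * cpow (fst p * (1 - snd p)) (b - 1) *
      exp (- complex_of_real (fst p))" for p :: "real \<times> real"
  have [measurable]: "k \<in> borel_measurable borel"
    unfolding k_def by measurable
  have transfer: "integral\<^sup>L lborel (\<lambda>p. indicator ({0<..} \<times> {0<..}) p *\<^sub>R
                     k (fst p + snd p, fst p / (fst p + snd p)))
      = integral\<^sup>L lborel (\<lambda>p. (indicator ({0<..} \<times> {0<..<1}) p * fst p) *\<^sub>R k p)"
    by (rule integral_transfer_from_nn_integral(2)[OF _ _ _ _ _ nn_integral_sum_ratio_coords])
      (auto simp: indicator_def)
  have polar: "indicator ({0<..} \<times> {0<..}) p *\<^sub>R k (fst p + snd p, fst p / (fst p + snd p))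
      = Gamma_kernel a (fst p) * Gamma_kernel b (snd p)" for p :: "real \<times> real"
  proof (cases "fst p > 0 \<and> snd p > 0")
    case True
    hence "(fst p + snd p) * (fst p / (fst p + snd p)) = fst p"
      and "(fst p + snd p) * (1 - fst p / (fst p + snd p)) = snd p"
      by (auto simp: field_simps)
    with True show ?thesis
      by (simp add: k_def Gamma_kernel_def indicator_def mem_Times_iff exp_add[symmetric])
  qed (auto simp: Gamma_kernel_def indicator_def mem_Times_iff)
  have split: "(indicator ({0<..} \<times> {0<..<1}) p * fst p) *\<^sub>R k p
      = Gamma_kernel (a + b) (fst p) * Beta_kernel a b (snd p)" for p :: "real \<times> real"
  proof (cases "fst p > 0 \<and> 0 < snd p \<and> snd p < 1")
    case True
    have "cpow (fst p) (a + b - 1) = cpow (fst p) 1 * cpow (fst p) (a - 1) * cpow (fst p) (b - 1)"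
      by (simp add: cpow_add[symmetric] algebra_simps)
    with True show ?thesis
      by (simp add: k_def Gamma_kernel_def Beta_kernel_def indicator_def mem_Times_iff
          cpow_mult cpow_one scaleR_conv_of_real mult_ac)
  qed (auto simp: Beta_kernel_def Gamma_kernel_def indicator_def mem_Times_iff)
  have "Gamma a * Gamma b = integral\<^sup>L lborel (\<lambda>p. Gamma_kernel a (fst p) * Gamma_kernel b (snd p))"
    using lborel_pair.integral_product[OF integrable_Gamma_kernel[OF a] integrable_Gamma_kernel[OF b]]
    by (simp add: lborel_prod integral_Gamma_kernel a b)
  also have "\<dots> = integral\<^sup>L lborel (\<lambda>p. Gamma_kernel (a + b) (fst p) * Beta_kernel a b (snd p))"
    using transfer by (simp add: polar split)
  also have "\<dots> = Gamma (a + b) * integral\<^sup>L lborel (Beta_kernel a b)"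
    using lborel_pair.integral_product[OF integrable_Gamma_kernel integrable_Beta_kernel] a b
    by (simp add: lborel_prod integral_Gamma_kernel)
  finally show ?thesis
    using Gamma_nonzero_Re_pos[of "a + b"] a b by (simp add: Beta_def field_simps)
qed

section \<open>The Mellin transform of the divided difference\<close>

lemma C1_halfline_has_real_derivative:
  assumes "C1_halfline f f'" "u > 0"
  shows "(f has_real_derivative f' u) (at u)"
proof -
  have "(f has_real_derivative f' u) (at u within {0..})"
    using assms by (simp add: C1_halfline_def)
  hence "(f has_real_derivative f' u) (at u within {0<..})"
    by (rule DERIV_subset) auto
  moreover have "at u within {0<..} = at u"
    using assms(2) by (intro at_within_open) auto
  ultimately show ?thesis by simp
qed

lemma convex_comb_pos:
  fixes x y t :: real
  assumes "0 < x" "0 < y" "t \<in> {0..1}"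
  shows "0 < t * x + (1 - t) * y"
proof (cases "t = 0")
  case False
  with assms have "t * x > 0" "(1 - t) * y \<ge> 0"
    by auto
  thus ?thesis by linarith
qed (use assms in simp)

lemma divdiff_has_integral_segment:
  assumes C1: "C1_halfline f f'" and "x > 0" "y > 0"
  shows "((\<lambda>t. f' (t * x + (1 - t) * y)) has_integral divdiff f f' x y) {0..1}"
proof (cases "x = y")
  case True
  thus ?thesis
    using has_integral_const_real[of "f' x" 0 1] by (simp add: divdiff_def algebra_simps)
next
  case False
  define F where "F t = f (t * x + (1 - t) * y) / (x - y)" for t
  have "(F has_vector_derivative f' (t * x + (1 - t) * y)) (at t within {0..1})" if "t \<in> {0..1}" for t
  proof -
    have "((\<lambda>t. t * x + (1 - t) * y) has_real_derivative (x - y)) (at t)"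
      by (auto intro!: derivative_eq_intros)
    from DERIV_chain2[OF C1_halfline_has_real_derivative[OF C1 convex_comb_pos] this]
    have "(F has_real_derivative f' (t * x + (1 - t) * y) * (x - y) / (x - y)) (at t)"
      unfolding F_def using assms that by (intro DERIV_cdivide) auto
    thus ?thesis
      using False by (simp add: has_real_derivative_iff_has_vector_derivative[symmetric] has_field_derivative_at_within)
  qed
  hence "((\<lambda>t. f' (t * x + (1 - t) * y)) has_integral (F 1 - F 0)) {0..1}"
    by (rule fundamental_theorem_of_calculus[OF zero_le_one])
  thus ?thesis
    using False by (simp add: F_def divdiff_def diff_divide_distrib)
qed

lemma
  assumes C1: "C1_halfline f f'" and "x > 0" "y > 0"
  shows integrable_derivative_segment:
      "integrable lborel (\<lambda>t. indicator {0<..<1} t * f' (t * x + (1 - t) * y))"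
    and divdiff_eq_integral_derivative_segment:
      "integral\<^sup>L lborel (\<lambda>t. indicator {0<..<1} t * f' (t * x + (1 - t) * y)) = divdiff f f' x y"
proof -
  have "continuous_on {0..} f'"
    using C1 by (simp add: C1_halfline_def)
  hence "continuous_on {0..1} (\<lambda>t. f' (t * x + (1 - t) * y))"
    by (rule continuous_on_compose2)
      (auto intro!: continuous_intros less_imp_le[OF convex_comb_pos] simp: assms)
  hence "set_integrable lborel {0..1} (\<lambda>t. f' (t * x + (1 - t) * y))"
    unfolding set_integrable_def by (intro borel_integrable_compact) auto
  hence int: "set_integrable lborel {0<..<1} (\<lambda>t. f' (t * x + (1 - t) * y))"
    by (rule set_integrable_subset) auto
  thus "integrable lborel (\<lambda>t. indicator {0<..<1} t * f' (t * x + (1 - t) * y))"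
    by (simp add: set_integrable_def)
  have "integral {0<..<1} (\<lambda>t. f' (t * x + (1 - t) * y)) = divdiff f f' x y"
    using divdiff_has_integral_segment[OF assms] by (subst (asm) has_integral_Icc_iff_Ioo) (rule integral_unique)
  thus "integral\<^sup>L lborel (\<lambda>t. indicator {0<..<1} t * f' (t * x + (1 - t) * y)) = divdiff f f' x y"
    using set_borel_integral_eq_integral(2)[OF int] by (simp add: set_lebesgue_integral_def)
qed

text \<open>At \<open>((s, r), t) = interp_coords ((x, y), t)\<close> this is \<open>x^(a-1) y^(b-1) g(s)\<close>
  (see \<open>interp_coords_inverse\<close>).\<close>
definition interp_integrand :: "complex \<Rightarrow> complex \<Rightarrow> (real \<Rightarrow> real) \<Rightarrow> (real \<times> real) \<times> real \<Rightarrow> complex"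
  where "interp_integrand a b g q =
    cpow (fst (fst q) * snd (fst q) / snd q) (a - 1) *
    cpow (fst (fst q) * (1 - snd (fst q)) / (1 - snd q)) (b - 1) * of_real (g (fst (fst q)))"

lemma borel_measurable_interp_integrand [measurable]:
  assumes [measurable]: "g \<in> borel_measurable borel"
  shows "interp_integrand a b g \<in> borel_measurable borel"
  unfolding interp_integrand_def by measurable

lemma interp_integrand_interp_coords:
  assumes "0 < x" "0 < y" "0 < t" "t < 1"
  shows "interp_integrand a b g (interp_coords ((x, y), t))
       = cpow x (a - 1) * cpow y (b - 1) * of_real (g (t * x + (1 - t) * y))"
proof -
  define s where "s = t * x + (1 - t) * y"
  define r where "r = t * x / s"
  have st: "interp_coords ((x, y), t) = ((s, r), t)"
    by (simp add: s_def r_def)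
  have "g s = g (t * x + (1 - t) * y)"
    by (simp add: s_def)
  then show ?thesis
    unfolding st interp_integrand_def fst_conv snd_conv using interp_coords_inverse[OF assms st] by simp
qed

lemma interp_integrand_jacobian:
  assumes s: "0 < s" and r: "0 < r" "r < 1" and t: "0 < t" "t < 1"
  shows "complex_of_real (s / (t * (1 - t))) * interp_integrand a b g ((s, r), t)
       = cpow s (a + b - 1) * of_real (g s) * (cpow r (a - 1) * cpow (1 - r) (b - 1)) *
         (cpow t ((1 - a) - 1) * cpow (1 - t) ((1 - b) - 1))"
proof -
  have jac: "complex_of_real (s / (t * (1 - t))) = exp (complex_of_real (ln s - ln t - ln (1 - t)))"
    using s t by (simp add: exp_of_real exp_diff)
  have ln_x: "ln (s * r / t) = ln s + ln r - ln t"
    and ln_y: "ln (s * (1 - r) / (1 - t)) = ln s + ln (1 - r) - ln (1 - t)"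
    using s r t by (simp_all add: ln_mult ln_div)
  show ?thesis
    unfolding jac interp_integrand_def cpow_def fst_conv snd_conv ln_x ln_y
    by (simp add: exp_add[symmetric] algebra_simps)
qed

lemma
  fixes g :: "real \<Rightarrow> real"
  assumes a: "0 < Re a" "Re a < 1" and b: "0 < Re b" "Re b < 1"
    and [measurable]: "g \<in> borel_measurable borel"
    and int_g: "integrable lborel (\<lambda>s. indicator {0<..} s *\<^sub>R (cpow s (a + b - 1) * of_real (g s)))"
  shows integrable_interp_integrand:
      "integrable lborel (\<lambda>q. (indicator ({0<..} \<times> {0<..}) (fst q) * indicator {0<..<1} (snd q)) *\<^sub>R
          interp_integrand a b g (interp_coords q))"
    and integral_interp_integrand:
      "integral\<^sup>L lborel (\<lambda>q. (indicator ({0<..} \<times> {0<..}) (fst q) * indicator {0<..<1} (snd q)) *\<^sub>R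
          interp_integrand a b g (interp_coords q)) = integral\<^sup>L lborel (\<lambda>s. indicator {0<..} s *\<^sub>R (cpow s (a + b - 1) * of_real (g s)))
          * Beta a b * Beta (1 - a) (1 - b)"
proof -
  define \<phi> where "\<phi> s = indicator {0<..} s *\<^sub>R (cpow s (a + b - 1) * of_real (g s))" for s
  define w where "w q = indicator ({0<..} \<times> {0<..<1}) (fst q) * indicator {0<..<1} (snd q) *
      (fst (fst q) / (snd q * (1 - snd q)))" for q :: "(real \<times> real) \<times> real"
  have [measurable]: "w \<in> borel_measurable borel"
    unfolding w_def by measurable
  have factor: "w q *\<^sub>R interp_integrand a b g q
      = \<phi> (fst (fst q)) * Beta_kernel a b (snd (fst q)) * Beta_kernel (1 - a) (1 - b) (snd q)" for q
  proof -
    obtain s r t where q: "q = ((s, r), t)"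
      by (metis prod.collapse)
    show ?thesis
    proof (cases "0 < s \<and> 0 < r \<and> r < 1 \<and> 0 < t \<and> t < 1")
      case True
      thus ?thesis
        using interp_integrand_jacobian[of s r t a b g]
        by (simp add: q w_def \<phi>_def Beta_kernel_def indicator_def scaleR_conv_of_real mult_ac)
    qed (auto simp: q w_def \<phi>_def Beta_kernel_def indicator_def)
  qed
  have int_\<phi>2: "integrable lborel (\<lambda>p. \<phi> (fst p) * Beta_kernel a b (snd p))"
    using lborel_pair.integrable_product[OF int_g[folded \<phi>_def] integrable_Beta_kernel] a b
    by (simp add: lborel_prod)
  have "integrable lborel (\<lambda>q. w q *\<^sub>R interp_integrand a b g q)"
    "integral\<^sup>L lborel (\<lambda>q. w q *\<^sub>R interp_integrand a b g q)
       = integral\<^sup>L lborel \<phi> * Beta a b * Beta (1 - a) (1 - b)"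
    using lborel_pair.integrable_product[OF int_\<phi>2 integrable_Beta_kernel]
      lborel_pair.integral_product[OF int_\<phi>2 integrable_Beta_kernel]
      lborel_pair.integral_product[OF int_g[folded \<phi>_def] integrable_Beta_kernel] a b
    by (simp_all add: factor lborel_prod integral_Beta_kernel)
  moreover note integral_transfer_from_nn_integral[where w' = w and k = "interp_integrand a b g",
      OF _ _ _ _ _ nn_integral_interp_coords[folded w_def]]
  ultimately show "integrable lborel (\<lambda>q. (indicator ({0<..} \<times> {0<..}) (fst q) * indicator {0<..<1} (snd q)) *\<^sub>R
          interp_integrand a b g (interp_coords q))"
    and "integral\<^sup>L lborel (\<lambda>q. (indicator ({0<..} \<times> {0<..}) (fst q) * indicator {0<..<1} (snd q)) *\<^sub>R
          interp_integrand a b g (interp_coords q)) = integral\<^sup>L lborel \<phi> * Beta a b * Beta (1 - a) (1 - b)"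
    by (auto simp: w_def indicator_def)
qed

lemma integral_interp_integrand_slice:
  assumes C1: "C1_halfline f f'" and "0 < x" "0 < y" and g: "\<And>s. 0 \<le> s \<Longrightarrow> g s = f' s"
  shows "(\<integral>t. indicator {0<..<1} t *\<^sub>R interp_integrand a b g (interp_coords ((x, y), t)) \<partial>lborel)
       = cpow x (a - 1) * cpow y (b - 1) * of_real (divdiff f f' x y)"
proof -
  have "(\<lambda>t. indicator {0<..<1} t *\<^sub>R interp_integrand a b g (interp_coords ((x, y), t)))
      = (\<lambda>t. (cpow x (a - 1) * cpow y (b - 1)) * of_real (indicator {0<..<1} t * f' (t * x + (1 - t) * y)))"
    using interp_integrand_interp_coords[OF assms(2,3)] g convex_comb_pos[OF assms(2,3)]
    by (auto simp: fun_eq_iff indicator_def less_imp_le)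
  hence "(\<integral>t. indicator {0<..<1} t *\<^sub>R interp_integrand a b g (interp_coords ((x, y), t)) \<partial>lborel)
      = (cpow x (a - 1) * cpow y (b - 1)) *
        of_real (\<integral>t. indicator {0<..<1} t * f' (t * x + (1 - t) * y) \<partial>lborel)"
    by (simp only: integral_mult_right_zero integral_complex_of_real)
  thus ?thesis
    using divdiff_eq_integral_derivative_segment[OF assms(1-3)] by simp
qed

lemma Mellin_divdiff:
  fixes a b :: complex
  assumes a: "0 < Re a" "Re a < 1" and b: "0 < Re b" "Re b < 1" and C1: "C1_halfline f f'"
    and int_f': "set_integrable lborel {0<..} (\<lambda>x. f' x * cmod (of_real x powr (a + b - 1)))"
  shows "set_lebesgue_integral (lborel \<Otimes>\<^sub>M lborel) ({0<..} \<times> {0<..})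
           (\<lambda>(x, y). of_real x powr (a - 1) * of_real y powr (b - 1) * of_real (divdiff f f' x y))
       = Beta a b * Beta (1 - a) (1 - b) *
         set_lebesgue_integral lborel {0<..} (\<lambda>x. of_real x powr (a + b - 1) * of_real (f' x))"
proof -
  text \<open>\<open>f'\<close> is only continuous on \<open>{0..}\<close>; cut it off to get a Borel function on \<open>\<real>\<close>.\<close>
  define g where "g s = indicator {0..} s * f' s" for s
  have [measurable]: "g \<in> borel_measurable borel"
    using borel_measurable_continuous_on_indicator[of "{0..}" f'] C1
    by (simp add: g_def[abs_def] C1_halfline_def)
  define \<phi> where "\<phi> s = indicator {0<..} s *\<^sub>R (cpow s (a + b - 1) * of_real (g s))" for s
  have int_\<phi>: "integrable lborel \<phi>"
  proof (rule Bochner_Integration.integrable_bound[OF int_f'[unfolded set_integrable_def]])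
    show "\<phi> \<in> borel_measurable lborel"
      unfolding \<phi>_def by measurable
    show "AE x in lborel. norm (\<phi> x) \<le> norm (indicator {0<..} x *\<^sub>R (f' x * cmod (of_real x powr (a + b - 1))))"
      by (intro AE_I2) (auto simp: \<phi>_def g_def indicator_def norm_mult powr_eq_cpow norm_cpow abs_mult)
  qed
  define F where "F q = (indicator ({0<..} \<times> {0<..}) (fst q) * indicator {0<..<1} (snd q)) *\<^sub>R
      interp_integrand a b g (interp_coords q)" for q
  have int_F: "integrable (lborel \<Otimes>\<^sub>M lborel) F"
    using integrable_interp_integrand[OF a b _ int_\<phi>[unfolded \<phi>_def]] by (simp add: F_def[abs_def] lborel_prod)
  have slice: "(\<integral>t. F (p, t) \<partial>lborel) = indicator ({0<..} \<times> {0<..}) p *\<^sub>R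
      (cpow (fst p) (a - 1) * cpow (snd p) (b - 1) * of_real (divdiff f f' (fst p) (snd p)))" for p
  proof (cases "0 < fst p \<and> 0 < snd p")
    case True
    thus ?thesis
      using integral_interp_integrand_slice[OF C1, of "fst p" "snd p" g a b]
      by (cases p) (simp add: F_def g_def indicator_def mem_Times_iff)
  qed (auto simp: F_def indicator_def)
  have "set_lebesgue_integral (lborel \<Otimes>\<^sub>M lborel) ({0<..} \<times> {0<..})
           (\<lambda>(x, y). of_real x powr (a - 1) * of_real y powr (b - 1) * of_real (divdiff f f' x y))
      = (\<integral>p. \<integral>t. F (p, t) \<partial>lborel \<partial>lborel)"
    unfolding set_lebesgue_integral_def slice lborel_prod
    by (intro Bochner_Integration.integral_cong) (auto simp: indicator_def powr_eq_cpow)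
  also have "\<dots> = integral\<^sup>L lborel \<phi> * Beta a b * Beta (1 - a) (1 - b)"
    using lborel_pair.integral_fst'[OF int_F] integral_interp_integrand[OF a b _ int_\<phi>[unfolded \<phi>_def]]
    by (simp add: F_def[abs_def] \<phi>_def[abs_def] lborel_prod)
  also have "integral\<^sup>L lborel \<phi>
      = set_lebesgue_integral lborel {0<..} (\<lambda>x. of_real x powr (a + b - 1) * of_real (f' x))"
    unfolding set_lebesgue_integral_def
    by (intro Bochner_Integration.integral_cong) (auto simp: indicator_def powr_eq_cpow \<phi>_def g_def)
  finally show ?thesis
    by (simp add: mult_ac)
qed

lemma gammak_1: "gammak 1 a = 1 / (Gamma a * Gamma (1 - a))"
  by (simp add: gammak_def)

lemma gammak_2: "gammak 2 w = 1 / (Gamma w * Gamma (2 - w))"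
  by (simp add: gammak_def Gamma_fact[of 1, simplified] numeral_2_eq_2)

lemma gammak_1_mult_Beta:
  assumes "0 < Re a" "Re a < 1" "0 < Re b" "Re b < 1"
  shows "gammak 1 a * gammak 1 b * (Beta a b * Beta (1 - a) (1 - b)) = gammak 2 (a + b)"
proof -
  have "Gamma a \<noteq> 0" "Gamma b \<noteq> 0" "Gamma (1 - a) \<noteq> 0" "Gamma (1 - b) \<noteq> 0"
    "Gamma (a + b) \<noteq> 0" "Gamma (2 - (a + b)) \<noteq> 0"
    using assms by (auto intro!: Gamma_nonzero_Re_pos)
  moreover have "1 - a + (1 - b) = 2 - (a + b)"
    by simp
  ultimately show ?thesis
    unfolding gammak_1 gammak_2 Beta_def by (simp add: field_simps)
qed

theorem lemma6p10:
  fixes z \<zeta> :: complex and f f' :: "real \<Rightarrow> real"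
  assumes "0 < Re z" "Re z < 1" "0 < Re \<zeta>" "Re \<zeta> < 1"
    and "C1_halfline f f'"
    and "set_integrable lborel {0<..} (\<lambda>x. f x * cmod (of_real x powr (z - 1)))"
    and "set_integrable lborel {0<..} (\<lambda>x. f x * cmod (of_real x powr (\<zeta> - 1)))"
    and "set_integrable lborel {0<..} (\<lambda>x. f' x * cmod (of_real x powr (z + \<zeta> - 1)))"
    and "set_integrable (lborel \<Otimes>\<^sub>M lborel) ({0<..} \<times> {0<..})
           (\<lambda>(x, y). divdiff f f' x y * cmod (of_real x powr (z - 1) * of_real y powr (\<zeta> - 1)))"
  shows "gammak 1 z * gammak 1 \<zeta> *
           set_lebesgue_integral (lborel \<Otimes>\<^sub>M lborel) ({0<..} \<times> {0<..})
             (\<lambda>(x, y). of_real x powr (z - 1) * of_real y powr (\<zeta> - 1) * of_real (divdiff f f' x y))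
         = gammak 2 (z + \<zeta>) *
           set_lebesgue_integral lborel {0<..}
             (\<lambda>x. of_real x powr (z + \<zeta> - 1) * of_real (f' x))"
  unfolding Mellin_divdiff[OF assms(1-5,8)] gammak_1_mult_Beta[OF assms(1-4), symmetric]
  by (simp only: mult.assoc)

end
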